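(* Let $V$ be a unitary lowest weight representation of $\hat{G}_{\Lambda,\Lambda_F}$ with lowest weight $h$. Then there exist $\alpha\in\mathbb{R}$ and $N\in\mathbb{N}$ such that $h_I(\lambda_1;I;\lambda_2)=\alpha$ for all $\lambda_1,\lambda_2\in\{1,\dots,\Lambda_F\}$ and all sequences $I$ with $\#(I)\ge N$.
   Context: Fix positive integers $\Lambda,\Lambda_F$. A sequence $\dot I=i_1\cdots i_a$ is a finite, possibly empty, sequence of integers in $\{1,\dots,\Lambda\}$; $\#(\dot I)=a$, juxtaposition denotes concatenation, and $\delta^{\dot I}_{\dot J}$ is $1$ if $\dot I=\dot J$ and $0$ otherwise (similarly for integers). Let $\mathcal{T}_o$ be the complex vector space with basis the symbols $\bar\phi^{\lambda_1}\otimes s^{\dot K}\otimes\phi^{\lambda_2}$, $1\le\lambda_1,\lambda_2\le\Lambda_F$, $\dot K$ any sequence. For all sequences $\dot I,\dot J$ and all $\lambda_i\in\{1,\dots,\Lambda_F\}$ define linear operators on $\mathcal{T}_o$: first kind: $\bar\Xi^{\lambda_1}_{\lambda_2}\otimes f^{\dot I}_{\dot J}\otimes\Xi^{\lambda_3}_{\lambda_4}(\bar\phi^{\lambda_5}\otimes s^{\dot K}\otimes\phi^{\lambda_6})=\delta^{\lambda_5}_{\lambda_2}\delta^{\dot K}_{\dot J}\delta^{\lambda_6}_{\lambda_4}\,\bar\phi^{\lambda_1}\otimes s^{\dot I}\otimes\phi^{\lambda_3}$; second kind: $\bar\Xi^{\lambda_1}_{\lambda_2}\otimes l^{\dot I}_{\dot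 J}(\bar\phi^{\lambda_3}\otimes s^{\dot K}\otimes\phi^{\lambda_4})=\delta^{\lambda_3}_{\lambda_2}\sum_{\dot K_1\dot K_2=\dot K}\delta^{\dot K_1}_{\dot J}\,\bar\phi^{\lambda_1}\otimes s^{\dot I\dot K_2}\otimes\phi^{\lambda_4}$; third kind: $r^{\dot I}_{\dot J}\otimes\Xi^{\lambda_1}_{\lambda_2}(\bar\phi^{\lambda_3}\otimes s^{\dot K}\otimes\phi^{\lambda_4})=\delta^{\lambda_4}_{\lambda_2}\sum_{\dot K_1\dot K_2=\dot K}\delta^{\dot K_2}_{\dot J}\,\bar\phi^{\lambda_3}\otimes s^{\dot K_1\dot I}\otimes\phi^{\lambda_1}$; fourth kind: $\sigma^{\dot I}_{\dot J}(\bar\phi^{\lambda_1}\otimes s^{\dot K}\otimes\phi^{\lambda_2})=\sum_{\dot K_1\dot K_2\dot K_3=\dot K}\delta^{\dot K_2}_{\dot J}\,\bar\phi^{\lambda_1}\otimes s^{\dot K_1\dot I\dot K_3}\otimes\phi^{\lambda_2}$; sums over all ways to write $\dot K$ as a concatenation of possibly empty sequences. The open string algebra $\hat{G}_{\Lambda,\Lambda_F}$ is the Lie algebra (commutator bracket) of operators on $\mathcal{T}_o$ spanned by these operators. Ordering: for finite sequences of positive integers $a=a_1\cdots a_m$, $b=b_1\cdots b_n$, $a>b$ means $m>n$, or $m=n\ne0$ and $a_r>b_r$ at the first index $r$ where they differ (applied to concatenations like $\dot I\lambda_1\lambda_3$). $G^{00}$ is the span of all $\bar\Xi^{\lambda_1}_{\lambda_1}\otimes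 f^{\dot I}_{\dot I}\otimes\Xi^{\lambda_2}_{\lambda_2}$, $\bar\Xi^{\lambda}_{\lambda}\otimes l^{\dot I}_{\dot I}$, $r^{\dot I}_{\dot I}\otimes\Xi^{\lambda}_{\lambda}$, $\sigma^{\dot I}_{\dot I}$. $G^-$ is the span of all operators of the four kinds with $\#(\dot I)<\#(\dot J)$, together with those with $\#(\dot I)=\#(\dot J)$ and $\dot J\lambda_2\lambda_4>\dot I\lambda_1\lambda_3$ (first kind), $\dot J\lambda_2>\dot I\lambda_1$ (second and third kind), $\dot J>\dot I$ (fourth kind). $\omega$ is the antilinear anti-involution swapping upper and lower indices: $\omega(\bar\Xi^{\lambda_1}_{\lambda_2}\otimes f^{\dot I}_{\dot J}\otimes\Xi^{\lambda_3}_{\lambda_4})=\bar\Xi^{\lambda_2}_{\lambda_1}\otimes f^{\dot J}_{\dot I}\otimes\Xi^{\lambda_4}_{\lambda_3}$, $\omega(\bar\Xi^{\lambda_1}_{\lambda_2}\otimes l^{\dot I}_{\dot J})=\bar\Xi^{\lambda_2}_{\lambda_1}\otimes l^{\dot J}_{\dot I}$, $\omega(r^{\dot I}_{\dot J}\otimes\Xi^{\lambda_1}_{\lambda_2})=r^{\dot J}_{\dot I}\otimes\Xi^{\lambda_2}_{\lambda_1}$, $\omega(\sigma^{\dot I}_{\dot J})=\sigma^{\dot J}_{\dot I}$. A lowest weight $h$ is a linear functional on $G^{00}$ real on the spanning operators; $h_I(\lambda_1;\dot I;\lambda_2)$ denotes its value on $\bar\Xi^{\lambda_1}_{\lambda_1}\otimes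 f^{\dot I}_{\dot I}\otimes\Xi^{\lambda_2}_{\lambda_2}$. A unitary lowest weight representation with lowest weight $h$ is a representation $V$ generated by a vector $v\ne0$ with $G^-v=0$ and $Hv=h(H)v$ for $H\in G^{00}$, carrying a positive definite Hermitian form with $\langle Xu,w\rangle=\langle u,\omega(X)w\rangle$ for all $X$. *)

theory Defs
  imports "HOL-Analysis.Analysis" "HOL-Library.Poly_Mapping"
begin

text \<open>A basis symbol  phibar^l1 (x) s^K (x) phi^l2  is encoded as the triple (l1, K, l2).
  T_o is modelled as finitely supported complex functions on all such triples;
  the generators act as zero on triples that are not valid basis symbols, so the
  operator algebra spanned is isomorphic to the one acting on T_o itself.\<close>

type_synonym basis = "nat \<times> nat list \<times> nat"
type_synonym tvec = "basis \<Rightarrow>\<^sub>0 complex"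
type_synonym top = "tvec \<Rightarrow> tvec"

definition tscale :: "complex \<Rightarrow> tvec \<Rightarrow> tvec" where
  "tscale c p = Poly_Mapping.map (\<lambda>x. c * x) p"

definition valid_seq :: "nat \<Rightarrow> nat list \<Rightarrow> bool" where
  "valid_seq Lam K \<longleftrightarrow> set K \<subseteq> {1..Lam}"

definition valid_basis :: "nat \<Rightarrow> nat \<Rightarrow> basis \<Rightarrow> bool" where
  "valid_basis Lam LamF b \<longleftrightarrow>
     (case b of (l1, K, l2) \<Rightarrow> l1 \<in> {1..LamF} \<and> l2 \<in> {1..LamF} \<and> valid_seq Lam K)"

text \<open>F l1 l2 I J l3 l4 = Xibar^l1_l2 (x) f^I_J (x) Xi^l3_l4;
  L l1 l2 I J = Xibar^l1_l2 (x) l^I_J;  R I J l1 l2 = r^I_J (x) Xi^l1_l2;  S I J = sigma^I_J.\<close>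

datatype gen =
    F nat nat "nat list" "nat list" nat nat
  | L nat nat "nat list" "nat list"
  | R "nat list" "nat list" nat nat
  | S "nat list" "nat list"

fun valid_gen :: "nat \<Rightarrow> nat \<Rightarrow> gen \<Rightarrow> bool" where
  "valid_gen Lam LamF (F l1 l2 I J l3 l4) \<longleftrightarrow>
     l1 \<in> {1..LamF} \<and> l2 \<in> {1..LamF} \<and> l3 \<in> {1..LamF} \<and> l4 \<in> {1..LamF}
     \<and> valid_seq Lam I \<and> valid_seq Lam J"
| "valid_gen Lam LamF (L l1 l2 I J) \<longleftrightarrow>
     l1 \<in> {1..LamF} \<and> l2 \<in> {1..LamF} \<and> valid_seq Lam I \<and> valid_seq Lam J"
| "valid_gen Lam LamF (R I J l1 l2) \<longleftrightarrow>
     l1 \<in> {1..LamF} \<and> l2 \<in> {1..LamF} \<and> valid_seq Lam I \<and> valid_seq Lam J"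
| "valid_gen Lam LamF (S I J) \<longleftrightarrow> valid_seq Lam I \<and> valid_seq Lam J"

fun gen_act_basis :: "gen \<Rightarrow> basis \<Rightarrow> tvec" where
  "gen_act_basis (F l1 l2 I J l3 l4) (l5, K, l6) =
     (if l5 = l2 \<and> K = J \<and> l6 = l4 then Poly_Mapping.single (l1, I, l3) 1 else 0)"
| "gen_act_basis (L l1 l2 I J) (l3, K, l4) =
     (if l3 = l2 then
        (\<Sum>n\<in>{0..length K}. if take n K = J
             then Poly_Mapping.single (l1, I @ drop n K, l4) 1 else 0)
      else 0)"
| "gen_act_basis (R I J l1 l2) (l3, K, l4) =
     (if l4 = l2 then
        (\<Sum>n\<in>{0..length K}. if drop n K = J
             then Poly_Mapping.single (l3, take n K @ I, l1) 1 else 0)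
      else 0)"
| "gen_act_basis (S I J) (l1, K, l2) =
     (\<Sum>(i, j)\<in>{(i, j). i \<le> j \<and> j \<le> length K}.
        if take (j - i) (drop i K) = J
        then Poly_Mapping.single (l1, take i K @ I @ drop j K, l2) 1 else 0)"

definition gen_op :: "nat \<Rightarrow> nat \<Rightarrow> gen \<Rightarrow> top" where
  "gen_op Lam LamF g t =
     (\<Sum>b\<in>Poly_Mapping.keys t. if valid_basis Lam LamF b
                    then tscale (Poly_Mapping.lookup t b) (gen_act_basis g b) else 0)"

definition open_string_algebra :: "nat \<Rightarrow> nat \<Rightarrow> top set" where
  "open_string_algebra Lam LamF =
     {X. \<exists>A c. finite A \<and> (\<forall>g\<in>A. valid_gen Lam LamF g) \<and>
            X = (\<lambda>t. \<Sum>g\<in>A. tscale (c g) (gen_op Lam LamF g t))}"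

definition op_add :: "top \<Rightarrow> top \<Rightarrow> top" where
  "op_add X Y = (\<lambda>t. X t + Y t)"

definition op_scale :: "complex \<Rightarrow> top \<Rightarrow> top" where
  "op_scale c X = (\<lambda>t. tscale c (X t))"

definition op_bracket :: "top \<Rightarrow> top \<Rightarrow> top" where
  "op_bracket X Y = (\<lambda>t. X (Y t) - Y (X t))"

definition seq_gt :: "nat list \<Rightarrow> nat list \<Rightarrow> bool" where
  "seq_gt a b \<longleftrightarrow> length a > length b \<or>
     (length a = length b \<and> a \<noteq> [] \<and>
      (\<exists>r < length a. take r a = take r b \<and> a ! r > b ! r))"

fun in_G00 :: "gen \<Rightarrow> bool" where
  "in_G00 (F l1 l2 I J l3 l4) \<longleftrightarrow> l1 = l2 \<and> I = J \<and> l3 = l4"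
| "in_G00 (L l1 l2 I J) \<longleftrightarrow> l1 = l2 \<and> I = J"
| "in_G00 (R I J l1 l2) \<longleftrightarrow> I = J \<and> l1 = l2"
| "in_G00 (S I J) \<longleftrightarrow> I = J"

fun in_Gminus :: "gen \<Rightarrow> bool" where
  "in_Gminus (F l1 l2 I J l3 l4) \<longleftrightarrow> length I < length J \<or>
      (length I = length J \<and> seq_gt (J @ [l2, l4]) (I @ [l1, l3]))"
| "in_Gminus (L l1 l2 I J) \<longleftrightarrow> length I < length J \<or>
      (length I = length J \<and> seq_gt (J @ [l2]) (I @ [l1]))"
| "in_Gminus (R I J l1 l2) \<longleftrightarrow> length I < length J \<or>
      (length I = length J \<and> seq_gt (J @ [l2]) (I @ [l1]))"
| "in_Gminus (S I J) \<longleftrightarrow> length I < length J \<or>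
      (length I = length J \<and> seq_gt J I)"

fun omega :: "gen \<Rightarrow> gen" where
  "omega (F l1 l2 I J l3 l4) = F l2 l1 J I l4 l3"
| "omega (L l1 l2 I J) = L l2 l1 J I"
| "omega (R I J l1 l2) = R J I l2 l1"
| "omega (S I J) = S J I"

text \<open>V is the carrier type 'v with complex scalar multiplication smul;
  rho maps operators of the algebra to maps on V; B is the Hermitian form
  (linear in the first, conjugate-linear in the second argument);
  h gives the lowest weight on the spanning operators of G^00.\<close>

definition is_representation ::
  "nat \<Rightarrow> nat \<Rightarrow> (complex \<Rightarrow> 'v::ab_group_add \<Rightarrow> 'v) \<Rightarrow> (top \<Rightarrow> 'v \<Rightarrow> 'v) \<Rightarrow> bool" where
  "is_representation Lam LamF smul rho \<longleftrightarrow>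
     vector_space smul \<and>
     (\<forall>X\<in>open_string_algebra Lam LamF. Vector_Spaces.linear smul smul (rho X)) \<and>
     (\<forall>X\<in>open_string_algebra Lam LamF. \<forall>Y\<in>open_string_algebra Lam LamF. \<forall>a b u.
        rho (op_add (op_scale a X) (op_scale b Y)) u = smul a (rho X u) + smul b (rho Y u)) \<and>
     (\<forall>X\<in>open_string_algebra Lam LamF. \<forall>Y\<in>open_string_algebra Lam LamF. \<forall>u.
        rho (op_bracket X Y) u = rho X (rho Y u) - rho Y (rho X u))"

definition pos_def_hermitian ::
  "(complex \<Rightarrow> 'v::ab_group_add \<Rightarrow> 'v) \<Rightarrow> ('v \<Rightarrow> 'v \<Rightarrow> complex) \<Rightarrow> bool" where
  "pos_def_hermitian smul B \<longleftrightarrow>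
     (\<forall>a u u' w. B (smul a u + u') w = a * B u w + B u' w) \<and>
     (\<forall>u w. B u w = cnj (B w u)) \<and>
     (\<forall>u. u \<noteq> 0 \<longrightarrow> Re (B u u) > 0)"

definition unitary_lowest_weight_rep ::
  "nat \<Rightarrow> nat \<Rightarrow> (complex \<Rightarrow> 'v::ab_group_add \<Rightarrow> 'v) \<Rightarrow> (top \<Rightarrow> 'v \<Rightarrow> 'v)
   \<Rightarrow> ('v \<Rightarrow> 'v \<Rightarrow> complex) \<Rightarrow> (gen \<Rightarrow> real) \<Rightarrow> bool" where
  "unitary_lowest_weight_rep Lam LamF smul rho B h \<longleftrightarrow>
     is_representation Lam LamF smul rho \<and>
     (\<exists>v. v \<noteq> 0 \<and>
        (\<forall>S. module.subspace smul S \<and> v \<in> S \<and>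
             (\<forall>X\<in>open_string_algebra Lam LamF. \<forall>u\<in>S. rho X u \<in> S) \<longrightarrow> S = UNIV) \<and>
        (\<forall>g. valid_gen Lam LamF g \<and> in_Gminus g \<longrightarrow> rho (gen_op Lam LamF g) v = 0) \<and>
        (\<forall>g. valid_gen Lam LamF g \<and> in_G00 g \<longrightarrow>
              rho (gen_op Lam LamF g) v = smul (complex_of_real (h g)) v)) \<and>
     pos_def_hermitian smul B \<and>
     (\<forall>g u w. valid_gen Lam LamF g \<longrightarrow>
        B (rho (gen_op Lam LamF g) u) w = B u (rho (gen_op Lam LamF (omega g)) w))"

end

theory Submission
  imports Defs
begin

(*
  Let g = Xibar^a1_b1 (x) f^I_J (x) Xi^a3_b3 lie in G^-, so that g kills the lowest weight vector v.
  With omega g and the difference H of the diagonal operators for (a1,I,a3) and (b1,J,b3), g spans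
  a copy of sl2 under which the Hermitian form is invariant. The squared norms N n of the vectors
  (omega g)^n v satisfy N (n+1) = (n+1) (c - n) N n, where c is the weight of H on v, and positivity
  forces c to be a natural number: h_I(a1;I;a3) - h_I(b1;J;b3) is a natural number if #I < #J.

  For a lower bound, the diagonal operator Xibar^l_l (x) l^I_I is the sum of the diagonal f-operators
  with left label l and sequence I and of the Xibar^l_l (x) l^Ii_Ii, and unitarity applied to
  [l^I_Ii, l^Ii_I] makes its weight nonincreasing in I. Hence on every length some h_I is at least
  (1 - Lambda) a / Lambda_F, where a is that weight for the empty sequence, and by integrality so is
  every h_I on shorter sequences.
  Values that are bounded below and drop by natural numbers as the length grows are eventually
  constant.
*)

lemma valid_seq_append [simp]: "valid_seq Lam (I @ J) \<longleftrightarrow> valid_seq Lam I \<and> valid_seq Lam J"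
  by (auto simp: valid_seq_def)

lemma valid_seq_Cons [simp]: "valid_seq Lam (i # I) \<longleftrightarrow> i \<in> {1..Lam} \<and> valid_seq Lam I"
  by (auto simp: valid_seq_def)

lemma valid_seq_Nil [simp]: "valid_seq Lam []"
  by (simp add: valid_seq_def)

lemma valid_basis_iff [simp]:
  "valid_basis Lam LamF (l1, K, l2) \<longleftrightarrow> l1 \<in> {1..LamF} \<and> l2 \<in> {1..LamF} \<and> valid_seq Lam K"
  by (simp add: valid_basis_def)

lemma lookup_tscale [simp]: "Poly_Mapping.lookup (tscale c p) k = c * Poly_Mapping.lookup p k"
  unfolding tscale_def by transfer (simp add: when_def)

lemma tscale_1 [simp]: "tscale 1 p = p"
  and tscale_0 [simp]: "tscale 0 p = 0"
  and tscale_zero [simp]: "tscale c 0 = 0"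
  and tscale_minus_1 [simp]: "tscale (-1) p = - p"
  by (rule poly_mapping_eqI; simp)+

(* gen_op is the linear extension of the action on basis symbols, so brackets of generators can be
   computed symbol by symbol. *)
definition lin_ext :: "(basis \<Rightarrow> tvec) \<Rightarrow> tvec \<Rightarrow> tvec" where
  "lin_ext \<phi> t = (\<Sum>b\<in>Poly_Mapping.keys t. tscale (Poly_Mapping.lookup t b) (\<phi> b))"

lemma lookup_lin_ext:
  "Poly_Mapping.lookup (lin_ext \<phi> t) k =
     (\<Sum>b\<in>Poly_Mapping.keys t. Poly_Mapping.lookup t b * Poly_Mapping.lookup (\<phi> b) k)"
  unfolding lin_ext_def by (simp add: lookup_sum)

lemma lookup_lin_ext_superset:
  assumes "finite X" "Poly_Mapping.keys t \<subseteq> X"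
  shows "Poly_Mapping.lookup (lin_ext \<phi> t) k =
           (\<Sum>b\<in>X. Poly_Mapping.lookup t b * Poly_Mapping.lookup (\<phi> b) k)"
  unfolding lookup_lin_ext
  by (rule sum.mono_neutral_left) (use assms in \<open>auto simp: in_keys_iff\<close>)

lemma lin_ext_add: "lin_ext \<phi> (p + q) = lin_ext \<phi> p + lin_ext \<phi> q"
proof (rule poly_mapping_eqI)
  fix k
  let ?X = "Poly_Mapping.keys p \<union> Poly_Mapping.keys q"
  have "Poly_Mapping.keys (p + q) \<subseteq> ?X" by (rule keys_add)
  then show "Poly_Mapping.lookup (lin_ext \<phi> (p + q)) k = Poly_Mapping.lookup (lin_ext \<phi> p + lin_ext \<phi> q) k"
    by (simp add: lookup_add lookup_lin_ext_superset[of ?X] sum.distrib algebra_simps)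
qed

lemma lin_ext_tscale: "lin_ext \<phi> (tscale c p) = tscale c (lin_ext \<phi> p)"
proof (rule poly_mapping_eqI)
  fix k
  have "Poly_Mapping.keys (tscale c p) \<subseteq> Poly_Mapping.keys p" by (auto simp: in_keys_iff)
  then show "Poly_Mapping.lookup (lin_ext \<phi> (tscale c p)) k = Poly_Mapping.lookup (tscale c (lin_ext \<phi> p)) k"
    by (simp add: lookup_lin_ext_superset[of "Poly_Mapping.keys p"] sum_distrib_left algebra_simps)
qed

lemma lin_ext_zero [simp]: "lin_ext \<phi> 0 = 0"
  by (simp add: lin_ext_def)

lemma lin_ext_single [simp]: "lin_ext \<phi> (Poly_Mapping.single b 1) = \<phi> b"
  by (rule poly_mapping_eqI) (simp add: lookup_lin_ext_superset[of "{b}"])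

lemma lin_ext_sum: "finite A \<Longrightarrow> lin_ext \<phi> (\<Sum>a\<in>A. f a) = (\<Sum>a\<in>A. lin_ext \<phi> (f a))"
  by (induction A rule: finite_induct) (simp_all add: lin_ext_add)

lemma lin_ext_lin_ext: "lin_ext \<psi> (lin_ext \<phi> t) = lin_ext (\<lambda>b. lin_ext \<psi> (\<phi> b)) t"
  unfolding lin_ext_def[of \<phi>] by (simp add: lin_ext_sum lin_ext_tscale) (simp add: lin_ext_def)

lemma lin_ext_diff: "lin_ext \<phi> t - lin_ext \<psi> t = lin_ext (\<lambda>b. \<phi> b - \<psi> b) t"
  by (rule poly_mapping_eqI) (simp add: lookup_minus lookup_lin_ext sum_subtractf algebra_simps)

lemma lin_ext_plus: "lin_ext \<phi> t + lin_ext \<psi> t = lin_ext (\<lambda>b. \<phi> b + \<psi> b) t"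
  by (rule poly_mapping_eqI) (simp add: lookup_add lookup_lin_ext sum.distrib algebra_simps)

lemma tscale_lin_ext: "tscale c (lin_ext \<phi> t) = lin_ext (\<lambda>b. tscale c (\<phi> b)) t"
  by (rule poly_mapping_eqI) (simp add: lookup_lin_ext sum_distrib_left algebra_simps)

lemma sum_lin_ext: "finite A \<Longrightarrow> (\<Sum>a\<in>A. lin_ext (\<phi> a) t) = lin_ext (\<lambda>b. \<Sum>a\<in>A. \<phi> a b) t"
  by (induction A rule: finite_induct) (simp_all add: lin_ext_plus, simp add: lin_ext_def)

definition basis_act :: "nat \<Rightarrow> nat \<Rightarrow> gen \<Rightarrow> basis \<Rightarrow> tvec" where
  "basis_act Lam LamF g b = (if valid_basis Lam LamF b then gen_act_basis g b else 0)"

lemma gen_op_eq_lin_ext: "gen_op Lam LamF g = lin_ext (basis_act Lam LamF g)"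
  unfolding gen_op_def lin_ext_def basis_act_def by (intro ext sum.cong) auto

lemma op_bracket_gen_op:
  "op_bracket (gen_op Lam LamF g1) (gen_op Lam LamF g2) =
     lin_ext (\<lambda>b. lin_ext (basis_act Lam LamF g1) (basis_act Lam LamF g2 b)
                 - lin_ext (basis_act Lam LamF g2) (basis_act Lam LamF g1 b))"
  unfolding op_bracket_def gen_op_eq_lin_ext by (simp add: lin_ext_lin_ext lin_ext_diff)

lemma op_scale_gen_op:
  "op_scale c (gen_op Lam LamF g) = lin_ext (\<lambda>b. tscale c (basis_act Lam LamF g b))"
  unfolding op_scale_def gen_op_eq_lin_ext by (simp add: tscale_lin_ext)

lemma op_add_lin_ext: "op_add (lin_ext \<phi>) (lin_ext \<psi>) = lin_ext (\<lambda>b. \<phi> b + \<psi> b)"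
  unfolding op_add_def by (simp add: lin_ext_plus)

lemma sum_take_eq:
  "(\<Sum>n\<in>{0..length K}. if take n K = J then f n else 0) =
     (if take (length J) K = J then f (length J) else (0::'a::comm_monoid_add))"
proof -
  have "(\<Sum>n\<in>{0..length K}. if take n K = J then f n else 0) =
          (\<Sum>n\<in>{0..length K}. if n = length J then (if take n K = J then f n else 0) else 0)"
    by (rule sum.cong) auto
  then show ?thesis
    by (auto simp: sum.delta dest: arg_cong[of _ _ length])
qed

lemma basis_act_F:
  assumes "valid_gen Lam LamF (F a1 b1 I J a3 b3)"
  shows "basis_act Lam LamF (F a1 b1 I J a3 b3) x =
           (if x = (b1, J, b3) then Poly_Mapping.single (a1, I, a3) 1 else 0)"
  using assms by (cases x) (auto simp: basis_act_def)

lemma basis_act_L: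
  "basis_act Lam LamF (L l1 l2 I J) (l3, K, l4) =
     (if valid_basis Lam LamF (l3, K, l4) \<and> l3 = l2 \<and> take (length J) K = J
      then Poly_Mapping.single (l1, I @ drop (length J) K, l4) 1 else 0)"
  by (simp add: basis_act_def sum_take_eq)

lemma bracket_F_omega:
  assumes "valid_gen Lam LamF (F a1 b1 I J a3 b3)" "(a1, I, a3) \<noteq> (b1, J, b3)"
  shows "op_bracket (gen_op Lam LamF (F a1 b1 I J a3 b3)) (gen_op Lam LamF (F b1 a1 J I b3 a3)) =
           op_add (op_scale 1 (gen_op Lam LamF (F a1 a1 I I a3 a3)))
                  (op_scale (-1) (gen_op Lam LamF (F b1 b1 J J b3 b3)))"
  unfolding op_bracket_gen_op op_scale_gen_op op_add_lin_ext
  using assms by (intro arg_cong[of _ _ lin_ext] ext) (simp add: basis_act_F)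

lemma bracket_F_diag:
  assumes "valid_gen Lam LamF (F a a I I b b)" "valid_gen Lam LamF (F p q J K s t)"
  shows "op_bracket (gen_op Lam LamF (F a a I I b b)) (gen_op Lam LamF (F p q J K s t)) =
           op_scale (of_bool ((a, I, b) = (p, J, s)) - of_bool ((a, I, b) = (q, K, t)))
                    (gen_op Lam LamF (F p q J K s t))"
  unfolding op_bracket_gen_op op_scale_gen_op
  using assms by (intro arg_cong[of _ _ lin_ext] ext) (auto simp: basis_act_F)

lemma basis_act_L_diag:
  "basis_act Lam LamF (L l l I I) (l1, K, l2) =
     (if valid_basis Lam LamF (l1, K, l2) \<and> l1 = l \<and> take (length I) K = I
      then Poly_Mapping.single (l1, K, l2) 1 else 0)"
  unfolding basis_act_L by (metis append_take_drop_id)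

lemma bracket_L_extend:
  assumes "valid_seq Lam I" "i \<in> {1..Lam}"
  shows "op_bracket (gen_op Lam LamF (L l l I (I @ [i]))) (gen_op Lam LamF (L l l (I @ [i]) I)) =
           op_add (op_scale 1 (gen_op Lam LamF (L l l I I)))
                  (op_scale (-1) (gen_op Lam LamF (L l l (I @ [i]) (I @ [i]))))"
  unfolding op_bracket_gen_op op_scale_gen_op op_add_lin_ext
proof (intro arg_cong[of _ _ lin_ext] ext)
  fix x :: basis
  obtain l1 K l2 where x: "x = (l1, K, l2)" by (cases x)
  consider (extends) r where "K = I @ i # r"
    | (other) r where "K = I @ r" "\<And>r'. r \<noteq> i # r'"
    | (none) "take (length I) K \<noteq> I"
  proof (cases "take (length I) K = I")
    case True
    then have K: "K = I @ drop (length I) K" by (metis append_take_drop_id)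
    show thesis
    proof (cases "\<exists>r. drop (length I) K = i # r")
      case True
      then show thesis using K extends by auto
    next
      case False
      then show thesis using K other by blast
    qed
  qed
  then show "lin_ext (basis_act Lam LamF (L l l I (I @ [i]))) (basis_act Lam LamF (L l l (I @ [i]) I) x)
      - lin_ext (basis_act Lam LamF (L l l (I @ [i]) I)) (basis_act Lam LamF (L l l I (I @ [i])) x) =
    tscale 1 (basis_act Lam LamF (L l l I I) x)
      + tscale (- 1) (basis_act Lam LamF (L l l (I @ [i]) (I @ [i])) x)"
  proof cases
    case extends
    then show ?thesis using assms by (auto simp: x basis_act_L)
  next
    case other
    then show ?thesis using assms by (cases r) (auto simp: x basis_act_L)
  next
    case none
    have "take (Suc (length I)) K \<noteq> I @ [i]"
    proof
      assume "take (Suc (length I)) K = I @ [i]"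
      then have "take (length I) (take (Suc (length I)) K) = I" by simp
      with none show False by simp
    qed
    then show ?thesis using none by (simp add: x basis_act_L)
  qed
qed

lemma gen_op_L_diag_split:
  assumes "l \<in> {1..LamF}" "valid_seq Lam I"
  shows "gen_op Lam LamF (L l l I I) =
           (\<lambda>t. (\<Sum>\<mu>\<in>{1..LamF}. gen_op Lam LamF (F l l I I \<mu> \<mu>) t)
               + (\<Sum>i\<in>{1..Lam}. gen_op Lam LamF (L l l (I @ [i]) (I @ [i])) t))"
  unfolding gen_op_eq_lin_ext sum_lin_ext[OF finite_atLeastAtMost] lin_ext_plus
proof (intro arg_cong[of _ _ lin_ext] ext)
  fix x :: basis
  obtain l1 K l2 where x: "x = (l1, K, l2)" by (cases x)
  consider (exact) "K = I" | (longer) j r where "K = I @ j # r" | (none) "take (length I) K \<noteq> I"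
    by (metis append_Nil2 append_take_drop_id neq_Nil_conv)
  then show "basis_act Lam LamF (L l l I I) x =
    (\<Sum>\<mu>\<in>{1..LamF}. basis_act Lam LamF (F l l I I \<mu> \<mu>) x) +
    (\<Sum>i\<in>{1..Lam}. basis_act Lam LamF (L l l (I @ [i]) (I @ [i])) x)"
  proof cases
    case exact
    then show ?thesis using assms by (auto simp: x basis_act_F basis_act_L_diag)
  next
    case longer
    then show ?thesis using assms by (auto simp: x basis_act_F basis_act_L_diag)
  next
    case none
    have "take (Suc (length I)) K \<noteq> I @ [i]" for i
    proof
      assume "take (Suc (length I)) K = I @ [i]"
      then have "take (length I) (take (Suc (length I)) K) = I" by simp
      with none show False by simp
    qed
    moreover have "K \<noteq> I" using none by auto
    ultimately show ?thesis using none assms by (auto simp: x basis_act_F basis_act_L_diag)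
  qed
qed

lemma Nats_if_nonneg_recurrence:
  fixes N :: "nat \<Rightarrow> real" and c :: real
  assumes N0: "N 0 > 0" and nonneg: "\<And>n. N n \<ge> 0"
    and step: "\<And>n. N (Suc n) = real (Suc n) * (c - real n) * N n"
  shows "c \<in> \<nat>"
proof (rule ccontr)
  assume c: "c \<notin> \<nat>"
  define m where "m = nat \<lceil>c\<rceil>"
  have below: "real n < c" if "n < m" for n
    using that unfolding m_def by linarith
  have pos: "N n > 0" if "n \<le> m" for n
    using that by (induction n) (auto simp: N0 step below)
  have "c \<noteq> real m" using c by (metis of_nat_in_Nats)
  then have "c < real m" unfolding m_def by linarith
  then have "real (Suc m) * (c - real m) < 0"
    by (simp add: mult_pos_neg)
  then have "N (Suc m) < 0"
    using pos[of m] by (simp add: step mult_neg_pos)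
  then show False using nonneg[of "Suc m"] by simp
qed

locale pos_def_hermitian_space = vector_space smul
  for smul :: "complex \<Rightarrow> 'v::ab_group_add \<Rightarrow> 'v" +
  fixes B :: "'v \<Rightarrow> 'v \<Rightarrow> complex"
  assumes pos_def_hermitian: "pos_def_hermitian smul B"
begin

lemma form_add_scale_left: "B (smul a u + u') w = a * B u w + B u' w"
  using pos_def_hermitian unfolding pos_def_hermitian_def by blast

lemma form_cnj_commute: "B u w = cnj (B w u)"
  using pos_def_hermitian unfolding pos_def_hermitian_def by blast

lemma form_pos: "u \<noteq> 0 \<Longrightarrow> Re (B u u) > 0"
  using pos_def_hermitian unfolding pos_def_hermitian_def by blast

lemma form_zero_left: "B 0 w = 0"
  using form_add_scale_left[of 1 0 0 w] by simp

lemma form_scale_left: "B (smul a u) w = a * B u w"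
  using form_add_scale_left[of a u 0 w] by (simp add: form_zero_left)

lemma form_scale_right: "B u (smul a w) = cnj a * B u w"
  using form_cnj_commute[of u "smul a w"] form_cnj_commute[of w u] by (simp add: form_scale_left)

lemma form_nonneg: "Re (B u u) \<ge> 0"
  using form_pos[of u] by (cases "u = 0") (auto simp: form_zero_left)

lemma unitary_sl2_lowest_weight_in_Nats:
  fixes X Y H :: "'v \<Rightarrow> 'v" and c :: real
  assumes Y_linear: "Vector_Spaces.linear smul smul Y"
    and bracket_XY: "\<And>u. X (Y u) - Y (X u) = H u"
    and bracket_HY: "\<And>u. H (Y u) - Y (H u) = smul (-2) (Y u)"
    and adjoint: "\<And>u w. B (Y u) w = B u (X w)"
    and "v \<noteq> 0" and Xv: "X v = 0" and Hv: "H v = smul (of_real c) v"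
  shows "c \<in> \<nat>"
proof -
  interpret Y: Vector_Spaces.linear smul smul Y by (fact Y_linear)
  define w where "w n = (Y ^^ n) v" for n
  have w_Suc: "w (Suc n) = Y (w n)" for n
    by (simp add: w_def)
  have H_w: "H (w n) = smul (of_real (c - 2 * real n)) (w n)" for n
  proof (induction n)
    case 0
    show ?case using Hv by (simp add: w_def)
  next
    case (Suc n)
    have "H (w (Suc n)) = Y (H (w n)) + smul (-2) (w (Suc n))"
      using bracket_HY[of "w n"] by (simp add: w_Suc algebra_simps)
    also have "\<dots> = smul (of_real (c - 2 * real (Suc n))) (w (Suc n))"
      by (simp add: Suc Y.scale w_Suc flip: scale_left_distrib) (simp add: algebra_simps)
    finally show ?case .
  qed
  have X_w: "X (w (Suc n)) = smul (of_real (real (Suc n) * (c - real n))) (w n)" for n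
  proof (induction n)
    case 0
    show ?case using bracket_XY[of v] by (simp add: w_def Xv Y.zero Hv)
  next
    case (Suc n)
    have "X (w (Suc (Suc n))) = Y (X (w (Suc n))) + H (w (Suc n))"
      using bracket_XY[of "w (Suc n)"] by (simp add: w_Suc algebra_simps)
    also have "\<dots> = smul (of_real (real (Suc n) * (c - real n) + (c - 2 * real (Suc n)))) (w (Suc n))"
      by (simp only: Suc H_w Y.scale of_real_add scale_left_distrib flip: w_Suc)
    finally show ?case
      by (simp add: algebra_simps)
  qed
  define N where "N n = Re (B (w n) (w n))" for n
  have "N (Suc n) = real (Suc n) * (c - real n) * N n" for n
    using adjoint[of "w n" "w (Suc n)"] by (simp add: N_def w_Suc[symmetric] X_w form_scale_right)
  then show ?thesis
    using Nats_if_nonneg_recurrence[of N c] form_pos[OF \<open>v \<noteq> 0\<close>] form_nonneg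
    by (simp add: N_def w_def)
qed

end

lemma gen_op_in_algebra:
  "valid_gen Lam LamF g \<Longrightarrow> gen_op Lam LamF g \<in> open_string_algebra Lam LamF"
  unfolding open_string_algebra_def
  by (intro CollectI exI[of _ "{g}"] exI[of _ "\<lambda>_. 1"]) auto

lemma gen_op_sum_in_algebra:
  assumes "finite A" "inj_on G A" "\<And>x. x \<in> A \<Longrightarrow> valid_gen Lam LamF (G x)"
  shows "(\<lambda>t. \<Sum>x\<in>A. gen_op Lam LamF (G x) t) \<in> open_string_algebra Lam LamF"
  unfolding open_string_algebra_def
  using assms by (intro CollectI exI[of _ "G ` A"] exI[of _ "\<lambda>_. 1"]) (auto simp: sum.reindex)

lemma omega_omega [simp]: "omega (omega g) = g"
  by (cases g) auto

lemma seq_gt_irrefl: "\<not> seq_gt a a"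
  by (auto simp: seq_gt_def)

locale unitary_lowest_weight_vector = pos_def_hermitian_space smul B
  for Lam LamF :: nat and smul :: "complex \<Rightarrow> 'v::ab_group_add \<Rightarrow> 'v"
    and rho :: "top \<Rightarrow> 'v \<Rightarrow> 'v" and B :: "'v \<Rightarrow> 'v \<Rightarrow> complex"
    and h :: "gen \<Rightarrow> real" and v :: 'v +
  assumes representation: "is_representation Lam LamF smul rho"
    and nonzero: "v \<noteq> 0"
    and Gminus_annihilates: "\<And>g. valid_gen Lam LamF g \<Longrightarrow> in_Gminus g \<Longrightarrow>
                               rho (gen_op Lam LamF g) v = 0"
    and G00_weight: "\<And>g. valid_gen Lam LamF g \<Longrightarrow> in_G00 g \<Longrightarrow>
                       rho (gen_op Lam LamF g) v = smul (of_real (h g)) v"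
    and adjoint: "\<And>g u w. valid_gen Lam LamF g \<Longrightarrow>
                    B (rho (gen_op Lam LamF g) u) w = B u (rho (gen_op Lam LamF (omega g)) w)"

lemma unitary_lowest_weight_rep_obtains_vector:
  assumes "unitary_lowest_weight_rep Lam LamF smul rho B h"
  obtains v where "unitary_lowest_weight_vector Lam LamF smul rho B h v"
  using assms unfolding unitary_lowest_weight_rep_def
  by (metis is_representation_def pos_def_hermitian_space.intro pos_def_hermitian_space_axioms.intro
        unitary_lowest_weight_vector.intro unitary_lowest_weight_vector_axioms.intro)

context unitary_lowest_weight_vector
begin

abbreviation gen_rep :: "gen \<Rightarrow> 'v \<Rightarrow> 'v" where
  "gen_rep g \<equiv> rho (gen_op Lam LamF g)"

lemma gen_rep_linear: "valid_gen Lam LamF g \<Longrightarrow> Vector_Spaces.linear smul smul (gen_rep g)"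
  using representation gen_op_in_algebra by (simp add: is_representation_def)

lemma rho_lin_comb:
  assumes "X \<in> open_string_algebra Lam LamF" "Y \<in> open_string_algebra Lam LamF"
  shows "rho (op_add (op_scale a X) (op_scale c Y)) u = smul a (rho X u) + smul c (rho Y u)"
  using representation assms by (simp add: is_representation_def)

lemma rho_add:
  assumes "X \<in> open_string_algebra Lam LamF" "Y \<in> open_string_algebra Lam LamF"
  shows "rho (\<lambda>t. X t + Y t) u = rho X u + rho Y u"
  using rho_lin_comb[OF assms, of 1 1 u] by (simp add: op_add_def op_scale_def)

lemma rho_sum_gen_op:
  assumes "finite A" "inj_on G A" "\<And>x. x \<in> A \<Longrightarrow> valid_gen Lam LamF (G x)"
  shows "rho (\<lambda>t. \<Sum>x\<in>A. gen_op Lam LamF (G x) t) u = (\<Sum>x\<in>A. gen_rep (G x) u)"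
  using assms
proof (induction A rule: finite_induct)
  case empty
  have "(\<lambda>t. 0) \<in> open_string_algebra Lam LamF"
    using gen_op_sum_in_algebra[of "{}"] by simp
  then show ?case
    using rho_add[of "\<lambda>t. 0" "\<lambda>t. 0" u] by simp
next
  case (insert x A)
  then show ?case
    by (simp add: rho_add gen_op_in_algebra gen_op_sum_in_algebra)
qed

lemma gen_rep_bracket:
  assumes "valid_gen Lam LamF g1" "valid_gen Lam LamF g2" "valid_gen Lam LamF k1" "valid_gen Lam LamF k2"
    and "op_bracket (gen_op Lam LamF g1) (gen_op Lam LamF g2) =
           op_add (op_scale a (gen_op Lam LamF k1)) (op_scale c (gen_op Lam LamF k2))"
  shows "gen_rep g1 (gen_rep g2 u) - gen_rep g2 (gen_rep g1 u) =
           smul a (gen_rep k1 u) + smul c (gen_rep k2 u)"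
  using representation assms gen_op_in_algebra rho_lin_comb
  by (metis is_representation_def)

lemma gen_rep_bracket_scale:
  assumes "valid_gen Lam LamF g1" "valid_gen Lam LamF g2" "valid_gen Lam LamF k"
    and "op_bracket (gen_op Lam LamF g1) (gen_op Lam LamF g2) = op_scale c (gen_op Lam LamF k)"
  shows "gen_rep g1 (gen_rep g2 u) - gen_rep g2 (gen_rep g1 u) = smul c (gen_rep k u)"
proof -
  have "op_scale c (gen_op Lam LamF k) =
          op_add (op_scale c (gen_op Lam LamF k)) (op_scale 0 (gen_op Lam LamF k))"
    by (simp add: op_add_def op_scale_def)
  then show ?thesis
    using gen_rep_bracket[OF assms(1-3,3)] assms(4) by simp
qed

lemma weight_le_of_bracket_omega:
  assumes g: "valid_gen Lam LamF g" "in_Gminus g"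
    and k: "valid_gen Lam LamF k1" "valid_gen Lam LamF k2" "in_G00 k1" "in_G00 k2"
    and bracket: "op_bracket (gen_op Lam LamF g) (gen_op Lam LamF (omega g)) =
                    op_add (op_scale 1 (gen_op Lam LamF k1)) (op_scale (-1) (gen_op Lam LamF k2))"
  shows "h k2 \<le> h k1"
proof -
  have og: "valid_gen Lam LamF (omega g)"
    using g(1) by (cases g) auto
  interpret og: Vector_Spaces.linear smul smul "gen_rep (omega g)"
    using gen_rep_linear[OF og] .
  have "gen_rep g (gen_rep (omega g) v) = smul 1 (gen_rep k1 v) + smul (-1) (gen_rep k2 v)"
    using gen_rep_bracket[OF g(1) og k(1,2) bracket, of v] Gminus_annihilates[OF g] og.zero by simp
  also have "\<dots> = smul (of_real (h k1 - h k2)) v"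
    using G00_weight k by (simp add: scale_left_diff_distrib scale_minus_left)
  finally have "B (gen_rep (omega g) v) (gen_rep (omega g) v) = of_real (h k1 - h k2) * B v v"
    using adjoint[OF og] by (simp add: form_scale_right)
  then have "0 \<le> (h k1 - h k2) * Re (B v v)"
    using form_nonneg[of "gen_rep (omega g) v"] by simp
  then show ?thesis
    using form_pos[OF nonzero] by (simp add: zero_le_mult_iff)
qed

lemma F_weight_diff_in_Nats:
  assumes valid: "valid_gen Lam LamF (F a1 b1 I J a3 b3)" and minus: "in_Gminus (F a1 b1 I J a3 b3)"
  shows "h (F a1 a1 I I a3 a3) - h (F b1 b1 J J b3 b3) \<in> \<nat>"
proof -
  let ?X = "gen_rep (F a1 b1 I J a3 b3)" and ?Y = "gen_rep (F b1 a1 J I b3 a3)"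
  let ?Hx = "gen_rep (F a1 a1 I I a3 a3)" and ?Hy = "gen_rep (F b1 b1 J J b3 b3)"
  have valids: "valid_gen Lam LamF (F b1 a1 J I b3 a3)"
    "valid_gen Lam LamF (F a1 a1 I I a3 a3)" "valid_gen Lam LamF (F b1 b1 J J b3 b3)"
    using valid by auto
  have distinct: "(a1, I, a3) \<noteq> (b1, J, b3)"
    using minus seq_gt_irrefl by auto
  interpret Y: Vector_Spaces.linear smul smul ?Y
    using gen_rep_linear[OF valids(1)] .
  have bracket_XY: "?X (?Y u) - ?Y (?X u) = ?Hx u - ?Hy u" for u
    using gen_rep_bracket[OF valid valids bracket_F_omega[OF valid distinct]]
    by (simp add: scale_minus_left)
  have Hx_Y: "?Hx (?Y u) - ?Y (?Hx u) = - ?Y u" for u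
    using gen_rep_bracket_scale[OF valids(2,1,1) bracket_F_diag[OF valids(2,1)]] distinct
    by (auto simp: scale_minus_left)
  have Hy_Y: "?Hy (?Y u) - ?Y (?Hy u) = ?Y u" for u
    using gen_rep_bracket_scale[OF valids(3,1,1) bracket_F_diag[OF valids(3,1)]] distinct
    by auto
  have bracket_HY: "(?Hx (?Y u) - ?Hy (?Y u)) - ?Y (?Hx u - ?Hy u) = smul (-2) (?Y u)" for u
  proof -
    have "(?Hx (?Y u) - ?Hy (?Y u)) - ?Y (?Hx u - ?Hy u) =
            (?Hx (?Y u) - ?Y (?Hx u)) - (?Hy (?Y u) - ?Y (?Hy u))"
      by (simp add: Y.diff algebra_simps)
    also have "\<dots> = - ?Y u - ?Y u"
      by (simp only: Hx_Y Hy_Y)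
    also have "\<dots> = smul (-2) (?Y u)"
      using scale_left_distrib[of "-1" "-1" "?Y u"] by (simp add: scale_minus_left)
    finally show ?thesis .
  qed
  show ?thesis
  proof (rule unitary_sl2_lowest_weight_in_Nats[where X = ?X and Y = ?Y and v = v])
    show "B (?Y u) w = B u (?X w)" for u w
      using adjoint[OF valids(1)] by simp
    show "?Hx v - ?Hy v = smul (of_real (h (F a1 a1 I I a3 a3) - h (F b1 b1 J J b3 b3))) v"
      using G00_weight valids by (simp add: scale_left_diff_distrib)
  qed (use Y.linear_axioms bracket_XY bracket_HY nonzero Gminus_annihilates[OF valid minus] in auto)
qed

lemma L_weight_extend_le:
  assumes "l \<in> {1..LamF}" "valid_seq Lam I" "i \<in> {1..Lam}"
  shows "h (L l l (I @ [i]) (I @ [i])) \<le> h (L l l I I)"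
  by (rule weight_le_of_bracket_omega[of "L l l I (I @ [i])"])
    (use assms bracket_L_extend[OF assms(2,3)] in auto)

lemma L_weight_le_Nil:
  assumes "l \<in> {1..LamF}" "valid_seq Lam I"
  shows "h (L l l I I) \<le> h (L l l [] [])"
  using assms(2)
proof (induction I rule: rev_induct)
  case (snoc i I)
  then show ?case
    using L_weight_extend_le[OF assms(1), of I i] by simp
qed simp

lemma weight_of_sum_gen_op:
  assumes "finite A" "inj_on G A"
    and "\<And>x. x \<in> A \<Longrightarrow> valid_gen Lam LamF (G x)" "\<And>x. x \<in> A \<Longrightarrow> in_G00 (G x)"
  shows "rho (\<lambda>t. \<Sum>x\<in>A. gen_op Lam LamF (G x) t) v = smul (of_real (\<Sum>x\<in>A. h (G x))) v"
proof -
  have "rho (\<lambda>t. \<Sum>x\<in>A. gen_op Lam LamF (G x) t) v = (\<Sum>x\<in>A. gen_rep (G x) v)"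
    by (rule rho_sum_gen_op[OF assms(1-3)])
  also have "\<dots> = (\<Sum>x\<in>A. smul (of_real (h (G x))) v)"
    using assms(3,4) G00_weight by (intro sum.cong) auto
  finally show ?thesis
    by (simp add: scale_sum_left)
qed

lemma L_weight_split:
  assumes "l \<in> {1..LamF}" "valid_seq Lam I"
  shows "h (L l l I I) =
           (\<Sum>\<mu>\<in>{1..LamF}. h (F l l I I \<mu> \<mu>)) + (\<Sum>i\<in>{1..Lam}. h (L l l (I @ [i]) (I @ [i])))"
proof -
  let ?FA = "\<lambda>t. \<Sum>\<mu>\<in>{1..LamF}. gen_op Lam LamF (F l l I I \<mu> \<mu>) t"
  let ?LA = "\<lambda>t. \<Sum>i\<in>{1..Lam}. gen_op Lam LamF (L l l (I @ [i]) (I @ [i])) t"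
  let ?sF = "\<Sum>\<mu>\<in>{1..LamF}. h (F l l I I \<mu> \<mu>)"
  let ?sL = "\<Sum>i\<in>{1..Lam}. h (L l l (I @ [i]) (I @ [i]))"
  have FA: "?FA \<in> open_string_algebra Lam LamF"
    by (rule gen_op_sum_in_algebra) (use assms in \<open>auto simp: inj_on_def\<close>)
  have LA: "?LA \<in> open_string_algebra Lam LamF"
    by (rule gen_op_sum_in_algebra) (use assms in \<open>auto simp: inj_on_def\<close>)
  have "smul (of_real (h (L l l I I))) v = gen_rep (L l l I I) v"
    by (rule G00_weight[symmetric]) (use assms in auto)
  also have "\<dots> = rho ?FA v + rho ?LA v"
    unfolding gen_op_L_diag_split[OF assms] by (rule rho_add[OF FA LA])
  also have "\<dots> = smul (of_real ?sF) v + smul (of_real ?sL) v"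
    by (subst (1 2) weight_of_sum_gen_op) (use assms in \<open>auto simp: inj_on_def\<close>)
  also have "\<dots> = smul (of_real (?sF + ?sL)) v"
    by (simp only: of_real_add scale_left_distrib)
  finally show ?thesis
    using nonzero by (simp add: scale_cancel_right del: of_real_sum flip: of_real_add)
qed

lemma F_weight_large_somewhere:
  assumes "l \<in> {1..LamF}" "valid_seq Lam I" "Lam > 0" "LamF > 0"
  shows "\<exists>\<mu>\<in>{1..LamF}. (1 - real Lam) * h (L l l [] []) / real LamF \<le> h (F l l I I \<mu> \<mu>)"
proof (rule ccontr)
  let ?C = "(1 - real Lam) * h (L l l [] [])"
  assume "\<not> ?thesis"
  then have "(\<Sum>\<mu>\<in>{1..LamF}. h (F l l I I \<mu> \<mu>)) < (\<Sum>\<mu>\<in>{1..LamF}. ?C / real LamF)"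
    using assms by (intro sum_strict_mono) (auto simp: not_le)
  also have "\<dots> = ?C"
    using assms by simp
  finally have F_sum: "(\<Sum>\<mu>\<in>{1..LamF}. h (F l l I I \<mu> \<mu>)) < ?C" .
  have "(\<Sum>i\<in>{1..Lam}. h (L l l (I @ [i]) (I @ [i]))) \<le> real Lam * h (L l l I I)"
    using sum_bounded_above[of "{1..Lam}" _ "h (L l l I I)"] L_weight_extend_le[OF assms(1,2)] by simp
  moreover have "?C \<le> (1 - real Lam) * h (L l l I I)"
    using L_weight_le_Nil[OF assms(1,2)] assms(3) by (intro mult_left_mono_neg) auto
  ultimately show False
    using L_weight_split[OF assms(1,2)] F_sum by (simp add: algebra_simps)
qed

lemma F_weight_lower_bound:
  assumes "Lam > 0" "LamF > 0" "valid_basis Lam LamF (l1, I, l2)"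
  shows "(1 - real Lam) * h (L 1 1 [] []) / real LamF \<le> h (F l1 l1 I I l2 l2)"
proof -
  let ?J = "replicate (Suc (length I)) (1::nat)"
  have J: "valid_seq Lam ?J"
    using assms(1) by (auto simp: valid_seq_def)
  obtain \<mu> where \<mu>: "\<mu> \<in> {1..LamF}"
    "(1 - real Lam) * h (L 1 1 [] []) / real LamF \<le> h (F 1 1 ?J ?J \<mu> \<mu>)"
    using F_weight_large_somewhere[of 1 ?J] J assms(1,2) by auto
  have "h (F l1 l1 I I l2 l2) - h (F 1 1 ?J ?J \<mu> \<mu>) \<in> \<nat>"
    by (rule F_weight_diff_in_Nats) (use assms J \<mu>(1) in auto)
  then show ?thesis
    using \<mu>(2) by (auto elim: Nats_cases)
qed

end

lemma eventually_constant_if_differences_in_Nats: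
  fixes p :: "'a \<Rightarrow> real" and len :: "'a \<Rightarrow> nat"
  assumes Nats: "\<And>x y. x \<in> A \<Longrightarrow> y \<in> A \<Longrightarrow> len x < len y \<Longrightarrow> p x - p y \<in> \<nat>"
    and bounded: "\<And>x. x \<in> A \<Longrightarrow> C \<le> p x"
  shows "\<exists>\<alpha> N. \<forall>x\<in>A. N \<le> len x \<longrightarrow> p x = \<alpha>"
proof (cases "\<exists>x0\<in>A. \<exists>y\<in>A. len x0 < len y")
  case False
  have "\<forall>x\<in>A. Suc (len (SOME x. x \<in> A)) \<le> len x \<longrightarrow> p x = 0"
  proof (intro ballI impI)
    fix x assume x: "x \<in> A" and long: "Suc (len (SOME x. x \<in> A)) \<le> len x"
    have "(SOME x. x \<in> A) \<in> A"
      using x by (rule someI)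
    with False x long show "p x = 0"
      by (auto simp: Suc_le_eq)
  qed
  then show ?thesis by blast
next
  case True
  then obtain x0 y0 where x0: "x0 \<in> A" and y0: "y0 \<in> A" "len x0 < len y0"
    by blast
  define gap where "gap k \<longleftrightarrow> (\<exists>x\<in>A. len x0 < len x \<and> p x0 - p x = real k)" for k
  have gap_bounded: "k \<le> nat \<lceil>p x0 - C\<rceil>" if "gap k" for k
  proof -
    have "real k \<le> p x0 - C"
      using that bounded unfolding gap_def by force
    then show ?thesis by linarith
  qed
  have gapI: "gap k" if "x \<in> A" "len x0 < len x" "p x0 - p x = real k" for x k
    using that unfolding gap_def by blast
  obtain k0 where "gap k0"
    using Nats[OF x0 y0] gapI[OF y0] by (auto elim: Nats_cases)
  then obtain d where "gap d" and d_max: "\<And>k. gap k \<Longrightarrow> k \<le> d"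
    using Nat.ex_has_greatest_nat[of gap k0 "nat \<lceil>p x0 - C\<rceil>"] gap_bounded by blast
  then obtain M where M: "M \<in> A" "len x0 < len M" "p x0 - p M = real d"
    unfolding gap_def by blast
  have "p x = p M" if x: "x \<in> A" "len M < len x" for x
  proof -
    have "len x0 < len x" using M(2) x(2) by simp
    then obtain k where "p x0 - p x = real k" "gap k"
      using Nats[OF x0 x(1)] gapI[OF x(1)] by (auto elim: Nats_cases)
    then have "p M \<le> p x"
      using d_max[of k] M(3) by simp
    moreover have "p x \<le> p M"
      using Nats[OF M(1) x(1) x(2)] by (auto elim: Nats_cases)
    ultimately show ?thesis by simp
  qed
  then have "\<forall>x\<in>A. Suc (len M) \<le> len x \<longrightarrow> p x = p M"
    by (simp add: Suc_le_eq)
  then show ?thesis by blast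
qed

theorem lemma21:
  fixes Lam LamF :: nat
    and smul :: "complex \<Rightarrow> 'v::ab_group_add \<Rightarrow> 'v"
    and rho :: "top \<Rightarrow> 'v \<Rightarrow> 'v"
    and B :: "'v \<Rightarrow> 'v \<Rightarrow> complex"
    and h :: "gen \<Rightarrow> real"
  assumes "Lam > 0" and "LamF > 0"
    and "unitary_lowest_weight_rep Lam LamF smul rho B h"
  shows "\<exists>(\<alpha>::real) (N::nat). \<forall>l1 l2 I.
           l1 \<in> {1..LamF} \<and> l2 \<in> {1..LamF} \<and> valid_seq Lam I \<and> length I \<ge> N
           \<longrightarrow> h (F l1 l1 I I l2 l2) = \<alpha>"
proof -
  obtain v where "unitary_lowest_weight_vector Lam LamF smul rho B h v"
    using assms(3) by (rule unitary_lowest_weight_rep_obtains_vector)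
  then interpret unitary_lowest_weight_vector Lam LamF smul rho B h v .
  let ?p = "\<lambda>(l1, I, l2). h (F l1 l1 I I l2 l2)" and ?len = "\<lambda>(l1, I, l2). length I"
  have "\<exists>\<alpha> N. \<forall>x\<in>Collect (valid_basis Lam LamF). N \<le> ?len x \<longrightarrow> ?p x = \<alpha>"
  proof (rule eventually_constant_if_differences_in_Nats)
    fix x y
    assume "x \<in> Collect (valid_basis Lam LamF)" "y \<in> Collect (valid_basis Lam LamF)" "?len x < ?len y"
    then show "?p x - ?p y \<in> \<nat>"
      by (cases x rule: prod_cases3, cases y rule: prod_cases3) (auto intro!: F_weight_diff_in_Nats)
  next
    fix x assume "x \<in> Collect (valid_basis Lam LamF)"
    then show "(1 - real Lam) * h (L 1 1 [] []) / real LamF \<le> ?p x"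
      using F_weight_lower_bound[OF assms(1,2)] by (cases x rule: prod_cases3) auto
  qed
  then obtain \<alpha> N where "\<forall>x\<in>Collect (valid_basis Lam LamF). N \<le> ?len x \<longrightarrow> ?p x = \<alpha>"
    by blast
  then show ?thesis
    by (intro exI[of _ \<alpha>] exI[of _ N]) auto
qed

end
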